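(* Let $d\ge 2$, $0<r<1$, $\rho>0$, and let $\mu$ be the uniform probability measure on the unit sphere $S^{d-1}\subset\mathbb{R}^d$. Let $k(x,y)=\mathbf 1(\|x-y\|\le r)$ (Euclidean distance). Fix $x_0\in S^{d-1}$, let $M^s=\{y\in S^{d-1}:\|y-x_0\|\le r\}$, and let $v_0:S^{d-1}\to[0,1]$ be the unique measurable map with $v_0=1$ on $M^s$ and, for $x\in S^{d-1}\setminus M^s$, $$v_0(x)=\frac{\int_{M^s}k(x,y)d\mu(y)+\int_{S^{d-1}\setminus M^s}v_0(y)k(x,y)d\mu(y)}{\rho+\int_{S^{d-1}}k(x,y)d\mu(y)}.$$ Let $\angle(x,x')=\arccos\langle x,x'\rangle$ and let $r'\in[0,\pi]$ be the angle $\angle(x,x')$ for points with $\|x-x'\|=r$. Then there exists a function $f:[0,\pi]\to[0,1]$ such that (1) $v_0(x)=f(\angle(x_0,x))$ for all $x\in S^{d-1}$, and (2) $f(\theta)>f(\theta')$ for all $\theta,\theta'\in[0,\pi]$ with $\theta'>\theta+r'$.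
   Context: $v_0$ is called the grounded voltage function centered at $x_0$ with ground weight $\rho$, source radius $r$ and disk kernel of bandwidth $r$. *)

theory Defs
  imports "HOL-Analysis.Analysis"
begin

text \<open>Uniform probability measure on the unit sphere of a Euclidean space:
  the push-forward of the normalised Lebesgue measure on the unit ball under the
  radial projection x \<mapsto> x / norm x (the point 0 has measure zero).
  This is the rotation-invariant probability measure on the sphere, i.e. the
  normalised surface measure.  It lives on the Borel sets of the ambient space
  and is concentrated on sphere 0 1.\<close>
definition sphere_unif :: "'a::euclidean_space measure" where
  "sphere_unif = distr (uniform_measure lborel (ball 0 1)) borel (\<lambda>x. x /\<^sub>R norm x)"

definition disk_kernel :: "real \<Rightarrow> 'a::euclidean_space \<Rightarrow> 'a \<Rightarrow> real" where
  "disk_kernel r x y = (if dist x y \<le> r then 1 else 0)"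

definition sph_angle :: "'a::euclidean_space \<Rightarrow> 'a \<Rightarrow> real" where
  "sph_angle x x' = arccos (x \<bullet> x')"

end

theory Submission
  imports Defs "HOL-Probability.Probability"
begin

text \<open>Reflections H in hyperplanes through the origin preserve the uniform measure on the sphere
  and the disk kernel k. Take such a hyperplane with x0 on its closed positive side and put
  G y = v0 y - v0 (H y). Off the source, the defining equation and the symmetry under H give
  2 (\<rho> + K z) G z = \<integral> G y (k z y - k (H z) y) dy with K z = \<integral> k z y dy, and the kernel
  difference is nonnegative when z and y are both on the positive side. So the infimum m of G on
  the positive half-sphere satisfies m \<ge> min m 0 / (1 + \<rho>), whence G \<ge> 0: v0 can only decrease
  under such a reflection. Reflections in hyperplanes containing x0 show that v0 depends only on the
  angle to x0, and reflections exchanging two points of a great circle through x0 show that the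
  resulting profile f is nonincreasing.

  For strictness, suppose f is constant on an angular interval longer than r'. The reflection
  exchanging its end points makes the integral above vanish, so its nonnegative integrand vanishes
  almost everywhere. Near the lower end of the level set, however, there is an open piece of the
  sphere on which G > 0 and the kernel difference is 1, and such pieces have positive measure.\<close>

section \<open>Hyperplane reflections\<close>

definition hyperplane_reflection :: "'a::real_inner \<Rightarrow> 'a \<Rightarrow> 'a" where
  "hyperplane_reflection u y = y - (2 * (y \<bullet> u)) *\<^sub>R u"

lemma linear_hyperplane_reflection: "linear (hyperplane_reflection u)"
  unfolding hyperplane_reflection_def by (rule linearI) (auto simp: algebra_simps inner_add_left)

lemma borel_measurable_hyperplane_reflection [measurable]:
  "hyperplane_reflection (u::'a::euclidean_space) \<in> borel_measurable borel"
  unfolding hyperplane_reflection_def by measurable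

context
  fixes u :: "'a::real_inner"
  assumes u: "norm u = 1"
begin

lemma hyperplane_reflection_inner:
  "hyperplane_reflection u x \<bullet> hyperplane_reflection u y = x \<bullet> y"
  using u by (simp add: hyperplane_reflection_def norm_eq_1 inner_diff_left inner_diff_right
      algebra_simps inner_commute)

lemma hyperplane_reflection_involution [simp]:
  "hyperplane_reflection u (hyperplane_reflection u y) = y"
  using u by (simp add: hyperplane_reflection_def norm_eq_1 inner_diff_left algebra_simps)

lemma inner_hyperplane_reflection_normal:
  "hyperplane_reflection u y \<bullet> u = - (y \<bullet> u)"
  using u by (simp add: hyperplane_reflection_def norm_eq_1 inner_diff_left)

lemma orthogonal_transformation_hyperplane_reflection:
  "orthogonal_transformation (hyperplane_reflection u)"
  by (simp add: orthogonal_transformation_def linear_hyperplane_reflection hyperplane_reflection_inner)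

lemma norm_hyperplane_reflection [simp]: "norm (hyperplane_reflection u x) = norm x"
  using hyperplane_reflection_inner[of x x] by (simp add: norm_eq_sqrt_inner)

lemma dist_hyperplane_reflection [simp]:
  "dist (hyperplane_reflection u x) (hyperplane_reflection u y) = dist x y"
  by (metis dist_norm linear_diff linear_hyperplane_reflection norm_hyperplane_reflection)

lemma dist_hyperplane_reflection_left:
  "dist (hyperplane_reflection u x) y = dist x (hyperplane_reflection u y)"
  by (metis dist_hyperplane_reflection hyperplane_reflection_involution)

lemma dist_hyperplane_reflection_squared:
  "(dist (hyperplane_reflection u x) y)\<^sup>2 = (dist x y)\<^sup>2 + 4 * (x \<bullet> u) * (y \<bullet> u)"
  using u by (simp add: dist_norm power2_norm_eq_inner hyperplane_reflection_def norm_eq_1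
      inner_diff_left inner_diff_right algebra_simps inner_commute)

lemma dist_le_dist_hyperplane_reflection:
  assumes "x \<bullet> u \<ge> 0" "y \<bullet> u \<ge> 0"
  shows "dist x y \<le> dist (hyperplane_reflection u x) y"
proof (rule power2_le_imp_le)
  show "(dist x y)\<^sup>2 \<le> (dist (hyperplane_reflection u x) y)\<^sup>2"
    using dist_hyperplane_reflection_squared[of x y] assms by simp
qed simp

end

lemma hyperplane_reflection_swap:
  fixes x p :: "'a::real_inner"
  assumes "norm x = norm p" "x \<noteq> p"
  shows "hyperplane_reflection ((x - p) /\<^sub>R norm (x - p)) x = p"
proof -
  define d where "d = x - p"
  have n: "norm d \<noteq> 0" using assms(2) by (simp add: d_def)
  have sq: "(norm d)\<^sup>2 = 2 * (x \<bullet> d)"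
    using assms(1) power2_norm_eq_inner[of x] power2_norm_eq_inner[of p]
    by (simp add: d_def power2_norm_eq_inner inner_diff_left inner_diff_right inner_commute)
  have "(2 * (x \<bullet> (d /\<^sub>R norm d))) *\<^sub>R (d /\<^sub>R norm d) = (2 * (x \<bullet> d) / (norm d)\<^sup>2) *\<^sub>R d"
    by (simp add: power2_eq_square field_simps)
  also have "\<dots> = d" by (simp add: sq[symmetric] n)
  finally show ?thesis by (simp add: hyperplane_reflection_def d_def)
qed

section \<open>Great circles\<close>

lemma cos_less_cos_reflected:
  fixes s t :: real
  assumes "0 \<le> s" "s \<le> pi" "s < t" "t < 2 * pi - s"
  shows "cos t < cos s"
proof (cases "t \<le> pi")
  case True
  then show ?thesis using assms by (intro cos_monotone_0_pi) auto
next
  case False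
  have "cos t = cos (2 * pi - t)" by (simp add: cos_diff)
  also have "\<dots> < cos s" using assms False by (intro cos_monotone_0_pi) auto
  finally show ?thesis .
qed

lemma inner_unit_le_1: "norm x = 1 \<Longrightarrow> norm y = 1 \<Longrightarrow> - 1 \<le> x \<bullet> y \<and> x \<bullet> y \<le> 1"
  using Cauchy_Schwarz_ineq2[of x y] by (simp add: abs_le_iff)

definition great_circle :: "'a::real_inner \<Rightarrow> 'a \<Rightarrow> real \<Rightarrow> 'a" where
  "great_circle x0 e t = cos t *\<^sub>R x0 + sin t *\<^sub>R e"

definition great_circle_mirror :: "'a::real_inner \<Rightarrow> 'a \<Rightarrow> real \<Rightarrow> 'a" where
  "great_circle_mirror x0 e m = sin m *\<^sub>R x0 - cos m *\<^sub>R e"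

lemma great_circle_0 [simp]: "great_circle x0 e 0 = x0"
  by (simp add: great_circle_def)

context
  fixes x0 e :: "'a::real_inner"
  assumes x0: "norm x0 = 1" and e: "norm e = 1" and x0e: "x0 \<bullet> e = 0"
begin

lemma inner_great_circle: "great_circle x0 e s \<bullet> great_circle x0 e t = cos (s - t)"
  using x0 e x0e
  by (simp add: great_circle_def norm_eq_1 inner_add_left inner_add_right inner_commute cos_diff
      algebra_simps)

lemma inner_great_circle_base: "x0 \<bullet> great_circle x0 e t = cos t"
  using inner_great_circle[of 0 t] by simp

lemma norm_great_circle [simp]: "norm (great_circle x0 e t) = 1"
  using inner_great_circle[of t t] by (simp add: norm_eq_1)

lemma dist_great_circle_squared:
  "(dist (great_circle x0 e s) (great_circle x0 e t))\<^sup>2 = 2 - 2 * cos (s - t)"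
  using inner_great_circle[of s t] inner_great_circle[of t s] cos_minus[of "s - t"]
  by (simp add: dist_norm power2_norm_eq_inner inner_diff_left inner_diff_right
      inner_great_circle)

lemma norm_great_circle_mirror: "norm (great_circle_mirror x0 e m) = 1"
proof -
  have "great_circle_mirror x0 e m \<bullet> great_circle_mirror x0 e m = (sin m)\<^sup>2 + (cos m)\<^sup>2"
    using x0 e x0e
    by (simp add: great_circle_mirror_def norm_eq_1 inner_diff_left inner_diff_right inner_commute
        power2_eq_square)
  then show ?thesis by (simp add: norm_eq_1)
qed

lemma inner_great_circle_mirror: "great_circle x0 e t \<bullet> great_circle_mirror x0 e m = sin (m - t)"
  using x0 e x0e
  by (simp add: great_circle_def great_circle_mirror_def norm_eq_1 inner_add_left inner_diff_right
      inner_commute sin_diff algebra_simps)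

lemma inner_base_great_circle_mirror: "x0 \<bullet> great_circle_mirror x0 e m = sin m"
  using inner_great_circle_mirror[of 0 m] by simp

lemma hyperplane_reflection_great_circle:
  "hyperplane_reflection (great_circle_mirror x0 e m) (great_circle x0 e t) = great_circle x0 e (2 * m - t)"
proof -
  have "2 * m - t = m + (m - t)" by simp
  then have trig: "cos (2 * m - t) = cos t - 2 * sin (m - t) * sin m"
      "sin (2 * m - t) = sin t + 2 * sin (m - t) * cos m"
    using cos_diff[of m "m - t"] sin_diff[of m "m - t"] by (simp_all only: cos_add sin_add) argo+
  have "hyperplane_reflection (great_circle_mirror x0 e m) (great_circle x0 e t) =
      great_circle x0 e t - (2 * sin (m - t)) *\<^sub>R great_circle_mirror x0 e m"
    by (simp add: hyperplane_reflection_def inner_great_circle_mirror)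
  also have "\<dots> = (cos t - 2 * sin (m - t) * sin m) *\<^sub>R x0 + (sin t + 2 * sin (m - t) * cos m) *\<^sub>R e"
    by (simp add: great_circle_def great_circle_mirror_def algebra_simps)
  also have "\<dots> = great_circle x0 e (2 * m - t)"
    by (simp only: great_circle_def trig)
  finally show ?thesis .
qed

end

section \<open>Invariance of the uniform measure on the sphere\<close>

lemma space_sphere_unif [simp]: "space sphere_unif = UNIV"
  by (simp add: sphere_unif_def)

lemma sets_sphere_unif [simp, measurable_cong]: "sets sphere_unif = sets borel"
  by (simp add: sphere_unif_def)

lemma borel_measurable_sphere_unif:
  "borel_measurable (sphere_unif :: 'a::euclidean_space measure) = borel_measurable borel"
  by (rule measurable_cong_sets) simp_all

lemma emeasure_lborel_ball_pos:
  "0 < r \<Longrightarrow> 0 < emeasure lborel (ball (c::'a::euclidean_space) r)"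
  using content_ball_pos[of r c] emeasure_lborel_ball_finite[of c r]
  by (simp add: emeasure_eq_ennreal_measure)

lemma prob_space_sphere_unif: "prob_space (sphere_unif :: 'a::euclidean_space measure)"
  unfolding sphere_unif_def
proof (rule prob_space.prob_space_distr)
  show "prob_space (uniform_measure lborel (ball (0::'a) 1))"
    using emeasure_lborel_ball_pos[of 1 "0::'a"] emeasure_lborel_ball_finite[of "0::'a" 1]
    by (intro prob_space_uniform_measure) auto
qed measurable

lemma borel_measurable_sgn_euclidean [measurable]:
  "(\<lambda>x::'a::euclidean_space. x /\<^sub>R norm x) \<in> borel_measurable borel"
  by measurable

lemma emeasure_sphere_unif:
  assumes "A \<in> sets borel"
  shows "emeasure (sphere_unif :: 'a::euclidean_space measure) A =
    emeasure lborel (ball 0 1 \<inter> (\<lambda>x. x /\<^sub>R norm x) -` A) / emeasure lborel (ball (0::'a) 1)"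
  unfolding sphere_unif_def using assms
  by (subst emeasure_distr)
     (auto intro!: emeasure_uniform_measure measurable_sets_borel[OF borel_measurable_sgn_euclidean])

lemma integrable_sphere_unif_bounded:
  fixes F :: "'a::euclidean_space \<Rightarrow> real"
  assumes "F \<in> borel_measurable borel" "\<And>y. \<bar>F y\<bar> \<le> B"
  shows "integrable sphere_unif F"
proof -
  interpret prob_space "sphere_unif :: 'a measure" by (rule prob_space_sphere_unif)
  show ?thesis
    using assms by (intro integrable_const_bound[where B=B]) (auto simp: borel_measurable_sphere_unif)
qed

text \<open>The library proves invariance of Lebesgue measure under orthogonal maps only on real^'n.
  Here an open set is covered, up to a negligible set, by disjoint balls (Vitali), and an orthogonal
  map sends balls to balls of the same radius.\<close>
lemma emeasure_lebesgue_disjoint_balls_image: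
  fixes g :: "'a::euclidean_space \<Rightarrow> 'a"
  assumes g: "orthogonal_transformation g" and C: "countable C" "\<And>i. i \<in> C \<Longrightarrow> 0 \<le> snd i"
    and disj: "pairwise (\<lambda>i j. disjnt (ball (fst i) (snd i)) (ball (fst j) (snd j))) C"
    and M: "negligible M"
  shows "emeasure lebesgue ((\<Union>i\<in>C. ball (g (fst i)) (snd i)) \<union> M) =
    (\<integral>\<^sup>+i. emeasure lebesgue (ball (fst i) (snd i)) \<partial>count_space C)"
proof -
  have image_ball: "ball (g (fst i)) (snd i) = g ` ball (fst i) (snd i)" for i
    by (simp add: image_orthogonal_transformation_ball[OF g])
  have "disjoint_family_on (\<lambda>i. ball (g (fst i)) (snd i)) C"
    using disj orthogonal_transformation_inj[OF g]
    unfolding disjoint_family_on_def pairwise_def disjnt_def image_ball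
    by (metis image_Int image_empty)
  then have "emeasure lebesgue (\<Union>i\<in>C. ball (g (fst i)) (snd i)) =
      (\<integral>\<^sup>+i. emeasure lebesgue (ball (g (fst i)) (snd i)) \<partial>count_space C)"
    using C(1) by (intro emeasure_UN_countable) auto
  also have "\<dots> = (\<integral>\<^sup>+i. emeasure lebesgue (ball (fst i) (snd i)) \<partial>count_space C)"
  proof (intro nn_integral_cong)
    fix i assume "i \<in> space (count_space C)"
    then have "0 \<le> snd i" using C(2) by auto
    then show "emeasure lebesgue (ball (g (fst i)) (snd i)) = emeasure lebesgue (ball (fst i) (snd i))"
      by (simp only: emeasure_lebesgue_ball_conv_unit_ball[of "snd i"])
  qed
  finally show ?thesis
    using M C(1) by (subst emeasure_Un_null_set) (auto simp: negligible_iff_null_sets)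
qed

lemma emeasure_lebesgue_orthogonal_image_open:
  fixes f :: "'a::euclidean_space \<Rightarrow> 'a"
  assumes f: "orthogonal_transformation f" and S: "open S"
  shows "emeasure lebesgue (f ` S) = emeasure lebesgue S"
proof -
  let ?K = "{p :: 'a \<times> real. 0 < snd p \<and> ball (fst p) (snd p) \<subseteq> S}"
  have "\<exists>i. i \<in> ?K \<and> x \<in> ball (fst i) (snd i) \<and> snd i < d" if "x \<in> S" "0 < d" for x d
  proof -
    obtain e where "0 < e" "ball x e \<subseteq> S" using S \<open>x \<in> S\<close> open_contains_ball by blast
    then show ?thesis by (intro exI[of _ "(x, min e (d/2))"]) (use \<open>0 < d\<close> in auto)
  qed
  then obtain C where C: "countable C" "C \<subseteq> ?K"
     "pairwise (\<lambda>i j. disjnt (ball (fst i) (snd i)) (ball (fst j) (snd j))) C"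
     "negligible (S - (\<Union>i\<in>C. ball (fst i) (snd i)))"
    by (rule Vitali_covering_theorem_balls[of S ?K fst snd])
  define N where "N = S - (\<Union>i\<in>C. ball (fst i) (snd i))"
  have radii: "0 \<le> snd i" if "i \<in> C" for i
    using C(2) that by auto
  have N_negligible: "negligible N"
    using C(4) by (simp add: N_def)
  have fN_negligible: "negligible (f ` N)"
    using N_negligible orthogonal_transformation_linear[OF f]
    by (intro negligible_differentiable_image_negligible)
       (auto simp: linear_linear bounded_linear_imp_differentiable_on)
  have S_eq: "S = (\<Union>i\<in>C. ball (fst i) (snd i)) \<union> N"
    using C(2) by (auto simp: N_def)
  then have "f ` S = (\<Union>i\<in>C. f ` ball (fst i) (snd i)) \<union> f ` N"
    by (simp add: image_Un image_UN)
  then have "f ` S = (\<Union>i\<in>C. ball (f (fst i)) (snd i)) \<union> f ` N"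
    by (simp add: image_orthogonal_transformation_ball[OF f])
  then show ?thesis
    using emeasure_lebesgue_disjoint_balls_image[OF f C(1) radii C(3) fN_negligible]
      emeasure_lebesgue_disjoint_balls_image[OF orthogonal_transformation_id C(1) radii C(3) N_negligible]
      S_eq
    by simp
qed

lemma borel_measurable_orthogonal_transformation:
  fixes f :: "'a::euclidean_space \<Rightarrow> 'a"
  shows "orthogonal_transformation f \<Longrightarrow> f \<in> borel_measurable borel"
  by (simp add: borel_measurable_continuous_onI linear_continuous_on linear_linear
      orthogonal_transformation_linear)

lemma lborel_distr_orthogonal_transformation:
  fixes f :: "'a::euclidean_space \<Rightarrow> 'a"
  assumes f: "orthogonal_transformation f"
  shows "distr lborel borel f = lborel"
proof -
  have f_meas: "f \<in> borel_measurable borel"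
    by (rule borel_measurable_orthogonal_transformation[OF f])
  have "continuous_on UNIV f"
    using orthogonal_transformation_linear[OF f] by (simp add: linear_continuous_on linear_linear)
  then have preimage_open: "open (f -` S)" if "open S" for S
    using that by (simp add: open_vimage)
  have emeasure_preimage_open: "emeasure lborel (f -` S) = emeasure lborel S" if "open S" for S
  proof -
    have "f ` (f -` S) = S" using orthogonal_transformation_surj[OF f] by (simp add: surj_image_vimage_eq)
    then have "emeasure lebesgue (f -` S) = emeasure lebesgue S"
      using emeasure_lebesgue_orthogonal_image_open[OF f preimage_open[OF that]] by simp
    then show ?thesis using that preimage_open[OF that] by (simp add: borel_open)
  qed
  show ?thesis
  proof (rule measure_eqI_generator_eq[where E="{S. open S}" and \<Omega>=UNIV and A="\<lambda>n. ball 0 (real n)"])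
    show "Int_stable {S::'a set. open S}" by (auto simp: Int_stable_def)
    show "range (\<lambda>n. ball 0 (real n)) \<subseteq> {S::'a set. open S}" by auto
    show "(\<Union>n. ball (0::'a) (real n)) = UNIV"
      by (auto simp: reals_Archimedean2)
    show "emeasure (distr lborel borel f) (ball 0 (real n)) \<noteq> \<infinity>" for n
      using emeasure_lborel_ball_finite[of "0::'a" "real n"] f_meas by (simp add: emeasure_distr emeasure_preimage_open)
  qed (use f_meas in \<open>auto simp: emeasure_distr emeasure_preimage_open sets_borel\<close>)
qed

lemma sphere_unif_distr_orthogonal_transformation:
  fixes f :: "'a::euclidean_space \<Rightarrow> 'a"
  assumes f: "orthogonal_transformation f"
  shows "distr sphere_unif borel f = sphere_unif"
proof (rule measure_eqI)
  fix A :: "'a set"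
  assume "A \<in> sets (distr sphere_unif borel f)"
  then have A: "A \<in> sets borel" by simp
  have f_meas: "f \<in> borel_measurable borel"
    by (rule borel_measurable_orthogonal_transformation[OF f])
  let ?N = "\<lambda>x::'a. x /\<^sub>R norm x"
  have "f (?N x) = ?N (f x)" for x
    using orthogonal_transformation_linear[OF f] orthogonal_transformation_norm[OF f]
    by (simp add: linear_cmul)
  then have preimage: "ball 0 1 \<inter> ?N -` (f -` A) = f -` (ball 0 1 \<inter> ?N -` A)"
    using orthogonal_transformation_norm[OF f] by auto
  have B: "ball 0 1 \<inter> ?N -` A \<in> sets borel"
    using A by (auto intro!: measurable_sets_borel[OF borel_measurable_sgn_euclidean])
  have "emeasure (distr sphere_unif borel f) A = emeasure sphere_unif (f -` A)"
    using A f_meas by (simp add: emeasure_distr)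
  also have "\<dots> = emeasure (distr lborel borel f) (ball 0 1 \<inter> ?N -` A) / emeasure lborel (ball (0::'a) 1)"
    using A B f_meas by (simp add: emeasure_sphere_unif measurable_sets_borel emeasure_distr preimage)
  also have "\<dots> = emeasure sphere_unif A"
    using A by (simp add: lborel_distr_orthogonal_transformation[OF f] emeasure_sphere_unif)
  finally show "emeasure (distr sphere_unif borel f) A = emeasure sphere_unif A" .
qed simp

lemma integral_sphere_unif_orthogonal_transformation:
  fixes f :: "'a::euclidean_space \<Rightarrow> 'a" and F :: "'a \<Rightarrow> real"
  assumes f: "orthogonal_transformation f" and F: "F \<in> borel_measurable borel"
  shows "(\<integral>y. F (f y) \<partial>sphere_unif) = (\<integral>y. F y \<partial>sphere_unif)"
proof -
  have "integral\<^sup>L (distr sphere_unif borel f) F = (\<integral>y. F (f y) \<partial>sphere_unif)"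
    using F borel_measurable_orthogonal_transformation[OF f] by (intro integral_distr) auto
  then show ?thesis by (simp add: sphere_unif_distr_orthogonal_transformation[OF f])
qed

lemma emeasure_sphere_unif_open_pos:
  fixes V :: "'a::euclidean_space set"
  assumes V: "open V" "w \<in> V" and w: "norm w = 1"
  shows "0 < emeasure sphere_unif (V \<inter> sphere 0 1)"
proof -
  let ?N = "\<lambda>x::'a. x /\<^sub>R norm x"
  define U where "U = (ball 0 1 - {0}) \<inter> ?N -` V"
  have "continuous_on (ball 0 1 - {0}) ?N"
    by (intro continuous_intros) auto
  then have "open U"
    unfolding U_def using V(1) by (intro continuous_open_preimage) auto
  moreover have "w /\<^sub>R 2 \<in> U"
    using V(2) w by (auto simp: U_def)
  ultimately obtain e where e: "0 < e" "ball (w /\<^sub>R 2) e \<subseteq> U"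
    using open_contains_ball by blast
  have U_sub: "U \<subseteq> ball 0 1 \<inter> ?N -` (V \<inter> sphere 0 1)"
    by (auto simp: U_def)
  have "0 < emeasure lborel (ball (w /\<^sub>R 2) e)"
    by (rule emeasure_lborel_ball_pos[OF e(1)])
  also have "\<dots> \<le> emeasure lborel (ball 0 1 \<inter> ?N -` (V \<inter> sphere 0 1))"
  proof (rule emeasure_mono)
    show "ball (w /\<^sub>R 2) e \<subseteq> ball 0 1 \<inter> ?N -` (V \<inter> sphere 0 1)" using e(2) U_sub by blast
    have "?N -` (V \<inter> sphere 0 1) \<in> sets borel"
      using V(1) by (intro measurable_sets_borel[OF borel_measurable_sgn_euclidean]) auto
    then show "ball 0 1 \<inter> ?N -` (V \<inter> sphere 0 1) \<in> sets lborel" by auto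
  qed
  finally show ?thesis
    using V(1) emeasure_lborel_ball_finite[of "0::'a" 1]
    by (simp add: emeasure_sphere_unif ennreal_zero_less_divide)
qed

section \<open>The grounded voltage equation\<close>

lemma borel_measurable_disk_kernel [measurable]: "disk_kernel r z \<in> borel_measurable borel"
  unfolding disk_kernel_def by measurable

lemma disk_kernel_bounds: "0 \<le> disk_kernel r z y" "disk_kernel r z y \<le> 1"
  by (auto simp: disk_kernel_def)

lemma pred_sphere [measurable]: "Measurable.pred borel (\<lambda>x::'a::euclidean_space. x \<in> sphere 0 1)"
  unfolding pred_def by (simp add: borel_closed)

locale grounded_voltage =
  fixes r \<rho> :: real and x0 :: "'a::euclidean_space" and v0 :: "'a \<Rightarrow> real"
  assumes r: "0 < r" "r < 1"
    and rho: "\<rho> > 0"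
    and x0: "x0 \<in> sphere 0 1"
    and meas: "v0 \<in> borel_measurable (sphere_unif :: 'a measure)"
    and range: "\<forall>x\<in>sphere 0 1. 0 \<le> v0 x \<and> v0 x \<le> 1"
    and on_src: "\<forall>x\<in>sphere 0 1. dist x x0 \<le> r \<longrightarrow> v0 x = 1"
    and eqn: "\<forall>x\<in>sphere 0 1. \<not> dist x x0 \<le> r \<longrightarrow>
       v0 x = ((LINT y:{y\<in>sphere 0 1. dist y x0 \<le> r}|sphere_unif. disk_kernel r x y)
             + (LINT y:{y\<in>sphere 0 1. \<not> dist y x0 \<le> r}|sphere_unif. v0 y * disk_kernel r x y))
             / (\<rho> + (LINT y:sphere 0 1|sphere_unif. disk_kernel r x y))"
begin

text \<open>v0 is only meaningful on the sphere; extending it by zero lets all integrals below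
  range over the whole space.\<close>
definition voltage :: "'a \<Rightarrow> real" where
  "voltage y = indicator (sphere 0 1) y * v0 y"

definition kernel_degree :: "'a \<Rightarrow> real" where
  "kernel_degree z = (LINT y:sphere 0 1|sphere_unif. disk_kernel r z y)"

definition voltage_integral :: "'a \<Rightarrow> real" where
  "voltage_integral z = (\<integral>y. voltage y * disk_kernel r z y \<partial>sphere_unif)"

lemma borel_measurable_v0 [measurable]: "v0 \<in> borel_measurable borel"
  using meas by (simp add: borel_measurable_sphere_unif)

lemma borel_measurable_voltage [measurable]: "voltage \<in> borel_measurable borel"
  unfolding voltage_def by measurable

lemma voltage_bounds: "0 \<le> voltage y" "voltage y \<le> 1"
  using range by (auto simp: voltage_def indicator_def)

lemma voltage_sphere: "y \<in> sphere 0 1 \<Longrightarrow> voltage y = v0 y"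
  by (simp add: voltage_def)

lemma integrable_kernel_degree:
  "integrable sphere_unif (\<lambda>y. indicator (sphere 0 1) y * disk_kernel r z y)"
  by (rule integrable_sphere_unif_bounded[where B=1]) (auto simp: disk_kernel_def indicator_def)

lemma integrable_voltage_integral: "integrable sphere_unif (\<lambda>y. voltage y * disk_kernel r z y)"
  by (rule integrable_sphere_unif_bounded[where B=1]) (use voltage_bounds in \<open>auto simp: disk_kernel_def\<close>)

lemma kernel_degree_bounds: "0 \<le> kernel_degree z" "kernel_degree z \<le> 1"
proof -
  interpret prob_space "sphere_unif :: 'a measure" by (rule prob_space_sphere_unif)
  show "0 \<le> kernel_degree z"
    unfolding kernel_degree_def set_lebesgue_integral_def
    by (rule integral_nonneg_AE) (auto simp: disk_kernel_def)
  have "kernel_degree z \<le> (\<integral>y. 1 \<partial>(sphere_unif :: 'a measure))"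
    unfolding kernel_degree_def set_lebesgue_integral_def using integrable_kernel_degree
    by (intro integral_mono) (auto simp: disk_kernel_def indicator_def)
  then show "kernel_degree z \<le> 1" using prob_space by simp
qed

lemma voltage_integral_le_kernel_degree: "voltage_integral z \<le> kernel_degree z"
  unfolding voltage_integral_def kernel_degree_def set_lebesgue_integral_def
  using integrable_voltage_integral integrable_kernel_degree
  by (intro integral_mono) (use range in \<open>auto simp: voltage_def indicator_def disk_kernel_def\<close>)

lemma v0_eq_quotient:
  assumes "x \<in> sphere 0 1" "\<not> dist x x0 \<le> r"
  shows "v0 x = voltage_integral x / (\<rho> + kernel_degree x)"
proof -
  let ?S = "{y\<in>sphere 0 1. dist y x0 \<le> r}" and ?T = "{y\<in>sphere 0 1. \<not> dist y x0 \<le> r}"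
  have "integrable sphere_unif (\<lambda>y. indicator ?S y * disk_kernel r x y)"
    by (rule integrable_sphere_unif_bounded[where B=1]) (auto simp: disk_kernel_def indicator_def)
  moreover have "integrable sphere_unif (\<lambda>y. indicator ?T y * (v0 y * disk_kernel r x y))"
    by (rule integrable_sphere_unif_bounded[where B=1])
       (use range in \<open>auto simp: disk_kernel_def indicator_def\<close>)
  ultimately have "(LINT y:?S|sphere_unif. disk_kernel r x y) + (LINT y:?T|sphere_unif. v0 y * disk_kernel r x y)
      = (\<integral>y. indicator ?S y * disk_kernel r x y + indicator ?T y * (v0 y * disk_kernel r x y) \<partial>sphere_unif)"
    unfolding set_lebesgue_integral_def by simp
  also have "\<dots> = voltage_integral x"
    unfolding voltage_integral_def
    by (rule Bochner_Integration.integral_cong) (use on_src in \<open>auto simp: voltage_def indicator_def\<close>)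
  finally show ?thesis
    using eqn assms by (simp add: kernel_degree_def)
qed

lemma v0_less_1:
  assumes "x \<in> sphere 0 1" "\<not> dist x x0 \<le> r"
  shows "v0 x < 1"
proof -
  have "v0 x \<le> kernel_degree x / (\<rho> + kernel_degree x)"
    unfolding v0_eq_quotient[OF assms]
    using voltage_integral_le_kernel_degree[of x] kernel_degree_bounds[of x] rho by (intro divide_right_mono) auto
  also have "\<dots> < 1" using kernel_degree_bounds[of x] rho by simp
  finally show ?thesis .
qed

section \<open>Comparison under reflections\<close>

definition voltage_defect :: "'a \<Rightarrow> 'a \<Rightarrow> real" where
  "voltage_defect u y = voltage y - voltage (hyperplane_reflection u y)"

definition kernel_defect :: "'a \<Rightarrow> 'a \<Rightarrow> 'a \<Rightarrow> real" where
  "kernel_defect u z y = disk_kernel r z y - disk_kernel r (hyperplane_reflection u z) y"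

lemma borel_measurable_voltage_defect [measurable]: "voltage_defect u \<in> borel_measurable borel"
  unfolding voltage_defect_def by measurable

lemma borel_measurable_kernel_defect [measurable]: "kernel_defect u z \<in> borel_measurable borel"
  unfolding kernel_defect_def by measurable

lemma integrable_defect_product:
  "integrable sphere_unif (\<lambda>y. voltage_defect u y * kernel_defect u z y)"
proof (rule integrable_sphere_unif_bounded[where B=1])
  fix y
  have "\<bar>voltage_defect u y\<bar> \<le> 1"
    using voltage_bounds[of y] voltage_bounds[of "hyperplane_reflection u y"]
    by (simp add: voltage_defect_def abs_le_iff)
  moreover have "\<bar>kernel_defect u z y\<bar> \<le> 1"
    by (simp add: kernel_defect_def disk_kernel_def)
  ultimately show "\<bar>voltage_defect u y * kernel_defect u z y\<bar> \<le> 1"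
    unfolding abs_mult by (intro mult_le_one) auto
qed measurable

context
  fixes u :: 'a
  assumes u: "norm u = 1"
begin

lemma voltage_defect_reflection: "voltage_defect u (hyperplane_reflection u y) = - voltage_defect u y"
  using u by (simp add: voltage_defect_def)

lemma kernel_defect_reflection: "kernel_defect u z (hyperplane_reflection u y) = - kernel_defect u z y"
  using u by (simp add: kernel_defect_def disk_kernel_def dist_hyperplane_reflection_left)

lemma kernel_defect_nonneg:
  assumes "0 \<le> z \<bullet> u" "0 \<le> y \<bullet> u"
  shows "0 \<le> kernel_defect u z y"
  using dist_le_dist_hyperplane_reflection[OF u assms] by (auto simp: kernel_defect_def disk_kernel_def)

lemma voltage_defect_sphere:
  "y \<in> sphere 0 1 \<Longrightarrow> voltage_defect u y = v0 y - v0 (hyperplane_reflection u y)"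
  using u by (simp add: voltage_defect_def voltage_sphere)

lemma kernel_degree_reflection: "kernel_degree (hyperplane_reflection u z) = kernel_degree z"
proof -
  have "kernel_degree z = (\<integral>y. indicator (sphere 0 1) (hyperplane_reflection u y) *
      disk_kernel r z (hyperplane_reflection u y) \<partial>sphere_unif)"
    unfolding kernel_degree_def set_lebesgue_integral_def real_scaleR_def
    by (rule integral_sphere_unif_orthogonal_transformation[symmetric])
       (auto intro: orthogonal_transformation_hyperplane_reflection[OF u])
  also have "\<dots> = kernel_degree (hyperplane_reflection u z)"
    unfolding kernel_degree_def set_lebesgue_integral_def real_scaleR_def using u
    by (intro Bochner_Integration.integral_cong) (auto simp: disk_kernel_def indicator_def dist_hyperplane_reflection_left)
  finally show ?thesis by simp
qed

text \<open>Symmetrising over the reflection, which preserves the measure and negates both defects.\<close>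
lemma voltage_integral_reflection_diff:
  "voltage_integral z - voltage_integral (hyperplane_reflection u z) =
     (\<integral>y. voltage_defect u y * kernel_defect u z y \<partial>sphere_unif) / 2"
proof -
  let ?H = "hyperplane_reflection u"
  have integrable: "integrable sphere_unif (\<lambda>y. voltage y * kernel_defect u z y)"
    and integrable_reflected: "integrable sphere_unif (\<lambda>y. voltage (?H y) * kernel_defect u z y)"
    by (rule integrable_sphere_unif_bounded[where B=1];
        use voltage_bounds in \<open>force simp: kernel_defect_def disk_kernel_def\<close>)+
  have diff: "voltage_integral z - voltage_integral (?H z) = (\<integral>y. voltage y * kernel_defect u z y \<partial>sphere_unif)"
    unfolding voltage_integral_def kernel_defect_def
    by (simp add: Bochner_Integration.integral_diff[OF integrable_voltage_integral integrable_voltage_integral, symmetric]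
        algebra_simps)
  have "(\<integral>y. voltage (?H y) * kernel_defect u z y \<partial>sphere_unif) =
      (\<integral>y. voltage (?H (?H y)) * kernel_defect u z (?H y) \<partial>sphere_unif)"
    by (rule integral_sphere_unif_orthogonal_transformation[symmetric])
       (auto intro: orthogonal_transformation_hyperplane_reflection[OF u])
  also have "\<dots> = - (\<integral>y. voltage y * kernel_defect u z y \<partial>sphere_unif)"
    using u by (simp add: kernel_defect_reflection)
  finally have "(\<integral>y. voltage_defect u y * kernel_defect u z y \<partial>sphere_unif) =
      2 * (\<integral>y. voltage y * kernel_defect u z y \<partial>sphere_unif)"
    unfolding voltage_defect_def left_diff_distrib
    using Bochner_Integration.integral_diff[OF integrable integrable_reflected] by simp
  then show ?thesis using diff by simp
qed

end

context
  fixes u :: 'a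
  assumes u: "norm u = 1" and x0u: "0 \<le> x0 \<bullet> u"
begin

lemma reflection_outside_source:
  "0 \<le> z \<bullet> u \<Longrightarrow> \<not> dist z x0 \<le> r \<Longrightarrow> \<not> dist (hyperplane_reflection u z) x0 \<le> r"
  using dist_le_dist_hyperplane_reflection[OF u _ x0u, of z] by linarith

lemma voltage_defect_eq:
  assumes z: "z \<in> sphere 0 1" "0 \<le> z \<bullet> u" "\<not> dist z x0 \<le> r"
  shows "voltage_defect u z =
    (\<integral>y. voltage_defect u y * kernel_defect u z y \<partial>sphere_unif) / (2 * (\<rho> + kernel_degree z))"
proof -
  let ?Hz = "hyperplane_reflection u z"
  have "?Hz \<in> sphere 0 1" using z(1) u by simp
  then have "v0 ?Hz = voltage_integral ?Hz / (\<rho> + kernel_degree z)"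
    using v0_eq_quotient reflection_outside_source[OF z(2,3)] kernel_degree_reflection[OF u] by simp
  moreover have "v0 z = voltage_integral z / (\<rho> + kernel_degree z)"
    using v0_eq_quotient[OF z(1,3)] .
  ultimately have "voltage_defect u z = (voltage_integral z - voltage_integral ?Hz) / (\<rho> + kernel_degree z)"
    using voltage_defect_sphere[OF u z(1)] by (simp add: diff_divide_distrib)
  then show ?thesis
    using voltage_integral_reflection_diff[OF u, of z] by simp
qed

lemma defect_product_lower_bound:
  assumes m: "m \<le> 0"
    and lb: "\<And>y. y \<in> sphere 0 1 \<Longrightarrow> 0 \<le> y \<bullet> u \<Longrightarrow> m \<le> voltage_defect u y"
    and z: "0 \<le> z \<bullet> u"
  shows "m * (indicator (sphere 0 1) y * (disk_kernel r z y + disk_kernel r (hyperplane_reflection u z) y))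
    \<le> voltage_defect u y * kernel_defect u z y"
proof -
  let ?H = "hyperplane_reflection u"
  have half: "m * (disk_kernel r z y + disk_kernel r (?H z) y) \<le> voltage_defect u y * kernel_defect u z y"
    if y: "y \<in> sphere 0 1" "0 \<le> y \<bullet> u" for y
  proof -
    have C: "0 \<le> kernel_defect u z y" "kernel_defect u z y \<le> disk_kernel r z y + disk_kernel r (?H z) y"
      using kernel_defect_nonneg[OF u z y(2)] disk_kernel_bounds[of r "?H z" y]
      by (auto simp: kernel_defect_def)
    then have "m * (disk_kernel r z y + disk_kernel r (?H z) y) \<le> m * kernel_defect u z y"
      using m by (simp add: mult_left_mono_neg)
    also have "\<dots> \<le> voltage_defect u y * kernel_defect u z y"
      using lb[OF y] C(1) by (simp add: mult_right_mono)
    finally show ?thesis .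
  qed
  consider "y \<notin> sphere 0 1" | "y \<in> sphere 0 1" "0 \<le> y \<bullet> u" | "y \<in> sphere 0 1" "y \<bullet> u < 0"
    by linarith
  then show ?thesis
  proof cases
    case 1
    then show ?thesis using u by (simp add: voltage_defect_def voltage_def)
  next
    case 2
    then show ?thesis using half by simp
  next
    case 3
    then have "?H y \<in> sphere 0 1" "0 \<le> ?H y \<bullet> u"
      using u by (auto simp: inner_hyperplane_reflection_normal)
    moreover have "disk_kernel r z (?H y) + disk_kernel r (?H z) (?H y) =
        disk_kernel r z y + disk_kernel r (?H z) y"
      using u by (simp add: disk_kernel_def dist_hyperplane_reflection_left)
    ultimately show ?thesis
      using half[of "?H y"] 3(1) u by (simp add: voltage_defect_reflection kernel_defect_reflection)
  qed
qed

lemma voltage_defect_lower_bound: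
  assumes m: "m \<le> 0"
    and lb: "\<And>y. y \<in> sphere 0 1 \<Longrightarrow> 0 \<le> y \<bullet> u \<Longrightarrow> m \<le> voltage_defect u y"
    and z: "z \<in> sphere 0 1" "0 \<le> z \<bullet> u"
  shows "m / (1 + \<rho>) \<le> voltage_defect u z"
proof (cases "dist z x0 \<le> r")
  case True
  then have "0 \<le> voltage_defect u z"
    using on_src z u voltage_bounds[of "hyperplane_reflection u z"]
    by (simp add: voltage_defect_def voltage_sphere)
  moreover have "m / (1 + \<rho>) \<le> 0" using m rho by (simp add: divide_nonpos_pos)
  ultimately show ?thesis by linarith
next
  case False
  let ?K = "kernel_degree z" and ?H = "hyperplane_reflection u"
  have K: "0 \<le> ?K" "?K \<le> 1" by (rule kernel_degree_bounds)+
  have "2 * m * ?K = (\<integral>y. m * (indicator (sphere 0 1) y * disk_kernel r z y) +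
        m * (indicator (sphere 0 1) y * disk_kernel r (?H z) y) \<partial>sphere_unif)"
    using integrable_kernel_degree[of z] integrable_kernel_degree[of "?H z"] kernel_degree_reflection[OF u, of z]
    by (simp add: kernel_degree_def set_lebesgue_integral_def)
  also have "\<dots> \<le> (\<integral>y. voltage_defect u y * kernel_defect u z y \<partial>sphere_unif)"
  proof (rule integral_mono)
    show "integrable sphere_unif (\<lambda>y. m * (indicator (sphere 0 1) y * disk_kernel r z y) +
        m * (indicator (sphere 0 1) y * disk_kernel r (?H z) y))"
      by (intro Bochner_Integration.integrable_add integrable_mult_right integrable_kernel_degree)
  qed (use defect_product_lower_bound[OF m lb z(2)] integrable_defect_product in \<open>simp_all add: distrib_left\<close>)
  finally have "m * ?K / (\<rho> + ?K) \<le> voltage_defect u z"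
    using voltage_defect_eq[OF z False] K rho by (simp add: field_simps)
  moreover have "m / (1 + \<rho>) \<le> m * ?K / (\<rho> + ?K)"
  proof -
    have "m * 1 \<le> m * ?K" using m K by (intro mult_left_mono_neg) auto
    then have "m * \<rho> \<le> m * ?K * \<rho>" using rho by (intro mult_right_mono) auto
    then have "m * (\<rho> + ?K) \<le> m * ?K * (1 + \<rho>)" by (simp add: algebra_simps)
    then show ?thesis using K rho by (simp add: field_simps)
  qed
  ultimately show ?thesis by linarith
qed

text \<open>A maximum principle: a negative infimum m of the defect on the half-sphere would satisfy
  m \<ge> m / (1 + \<rho>).\<close>
lemma voltage_defect_nonneg:
  assumes z: "z \<in> sphere 0 1" "0 \<le> z \<bullet> u"
  shows "0 \<le> voltage_defect u z"
proof -
  define m where "m = Inf (voltage_defect u ` {y \<in> sphere 0 1. 0 \<le> y \<bullet> u})"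
  have "bdd_below (voltage_defect u ` {y \<in> sphere 0 1. 0 \<le> y \<bullet> u})"
  proof (rule bdd_belowI2[where m="-1"])
    show "-1 \<le> voltage_defect u y" for y
      using voltage_bounds[of y] voltage_bounds[of "hyperplane_reflection u y"]
      by (simp add: voltage_defect_def)
  qed
  then have m_le: "m \<le> voltage_defect u y" if "y \<in> sphere 0 1" "0 \<le> y \<bullet> u" for y
    unfolding m_def using that by (intro cInf_lower) auto
  have "min m 0 / (1 + \<rho>) \<le> voltage_defect u y" if "y \<in> sphere 0 1" "0 \<le> y \<bullet> u" for y
    using m_le that by (intro voltage_defect_lower_bound) (auto simp: min_le_iff_disj)
  then have "min m 0 / (1 + \<rho>) \<le> m"
    unfolding m_def using x0 x0u by (intro cInf_greatest) auto
  then have "0 \<le> m"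
    using rho by (auto simp: min_def field_simps zero_le_mult_iff split: if_splits)
  then show ?thesis using m_le[OF z] by linarith
qed

lemma v0_reflection_le:
  assumes "z \<in> sphere 0 1" "0 \<le> z \<bullet> u"
  shows "v0 (hyperplane_reflection u z) \<le> v0 z"
  using voltage_defect_nonneg[OF assms] voltage_defect_sphere[OF u assms(1)] by simp

lemma voltage_defect_pos:
  assumes z: "z \<in> sphere 0 1" "0 \<le> z \<bullet> u" "\<not> dist z x0 \<le> r"
    and V: "open V" "w \<in> V" "w \<in> sphere 0 1"
    and pos: "\<And>y. y \<in> V \<inter> sphere 0 1 \<Longrightarrow> 0 < voltage_defect u y * kernel_defect u z y"
  shows "0 < voltage_defect u z"
proof (rule ccontr)
  let ?GC = "\<lambda>y. voltage_defect u y * kernel_defect u z y"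
  assume "\<not> 0 < voltage_defect u z"
  then have "voltage_defect u z = 0" using voltage_defect_nonneg[OF z(1,2)] by simp
  moreover have "0 < \<rho> + kernel_degree z" using rho kernel_degree_bounds[of z] by linarith
  ultimately have "(\<integral>y. ?GC y \<partial>sphere_unif) = 0"
    using voltage_defect_eq[OF z] by simp
  moreover have nonneg: "0 \<le> ?GC y" for y
    using defect_product_lower_bound[of 0 z y] voltage_defect_nonneg z(2) by simp
  ultimately have "AE y in sphere_unif. ?GC y = 0"
    using integral_nonneg_eq_0_iff_AE[OF integrable_defect_product] by simp
  then have "emeasure sphere_unif {y. ?GC y \<noteq> 0} = 0"
    by (subst (asm) AE_iff_measurable[OF _ refl]) auto
  moreover have "V \<inter> sphere 0 1 \<subseteq> {y. ?GC y \<noteq> 0}"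
    using pos by force
  moreover have "{y. ?GC y \<noteq> 0} \<in> sets sphere_unif"
    by measurable
  ultimately have "emeasure sphere_unif (V \<inter> sphere 0 1) = 0"
    by (metis emeasure_mono le_zero_eq)
  then show False
    using emeasure_sphere_unif_open_pos[OF V(1,2)] V(3) by simp
qed

end

section \<open>The angular profile\<close>

lemma norm_x0: "norm x0 = 1"
  using x0 by simp

lemma v0_eq_of_inner_eq:
  assumes "x \<in> sphere 0 1" "p \<in> sphere 0 1" "x0 \<bullet> x = x0 \<bullet> p"
  shows "v0 x = v0 p"
proof -
  have le: "v0 q \<le> v0 y" if "y \<in> sphere 0 1" "q \<in> sphere 0 1" "x0 \<bullet> y = x0 \<bullet> q" "y \<noteq> q" for y q
  proof -
    define u where "u = (y - q) /\<^sub>R norm (y - q)"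
    have u: "norm u = 1" using that(4) by (simp add: u_def)
    have "x0 \<bullet> u = 0" using that(3) by (simp add: u_def inner_diff_right)
    moreover have "0 \<le> y \<bullet> u"
      using that(1,2) inner_unit_le_1[of y q] by (simp add: u_def inner_diff_right norm_eq_1)
    moreover have "hyperplane_reflection u y = q"
      using that by (simp add: u_def hyperplane_reflection_swap)
    ultimately show ?thesis
      using v0_reflection_le[OF u _ that(1)] by simp
  qed
  show ?thesis
    using le[of x p] le[of p x] assms by (cases "x = p") auto
qed

definition source_angle :: real where
  "source_angle = arccos (1 - r\<^sup>2 / 2)"

lemma source_angle: "cos source_angle = 1 - r\<^sup>2 / 2" "0 < source_angle" "source_angle < pi"
proof -
  have r2: "0 < r\<^sup>2" "r\<^sup>2 < 1" using r by (auto simp: power_less_one_iff)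
  then show "cos source_angle = 1 - r\<^sup>2 / 2"
    unfolding source_angle_def by (intro cos_arccos) auto
  show "0 < source_angle"
    using r2 arccos_less_arccos[of "1 - r\<^sup>2 / 2" 1] by (simp add: source_angle_def)
  show "source_angle < pi"
    using r2 arccos_less_arccos[of "-1" "1 - r\<^sup>2 / 2"] by (simp add: source_angle_def)
qed

definition profile :: "'a \<Rightarrow> real \<Rightarrow> real" where
  "profile e \<phi> = v0 (great_circle x0 e \<phi>)"

context
  fixes e :: 'a
  assumes e: "norm e = 1" and x0e: "x0 \<bullet> e = 0"
begin

lemma great_circle_sphere: "great_circle x0 e t \<in> sphere 0 1"
  using norm_great_circle[OF norm_x0 e x0e] by simp

lemma dist_great_circle_le_radius_iff:
  "dist (great_circle x0 e s) (great_circle x0 e t) \<le> r \<longleftrightarrow> cos source_angle \<le> cos (s - t)"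
proof -
  have "dist (great_circle x0 e s) (great_circle x0 e t) \<le> r \<longleftrightarrow>
      (dist (great_circle x0 e s) (great_circle x0 e t))\<^sup>2 \<le> r\<^sup>2"
    using r by (simp add: abs_le_square_iff[symmetric])
  then show ?thesis
    by (auto simp: dist_great_circle_squared[OF norm_x0 e x0e] source_angle(1))
qed

lemma dist_great_circle_less_radius_iff:
  "dist (great_circle x0 e s) (great_circle x0 e t) < r \<longleftrightarrow> cos source_angle < cos (s - t)"
proof -
  have "dist (great_circle x0 e s) (great_circle x0 e t) < r \<longleftrightarrow>
      (dist (great_circle x0 e s) (great_circle x0 e t))\<^sup>2 < r\<^sup>2"
    using r by (auto intro: power_strict_mono dest: power_less_imp_less_base)
  then show ?thesis
    by (auto simp: dist_great_circle_squared[OF norm_x0 e x0e] source_angle(1))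
qed

lemma great_circle_in_source_iff:
  assumes "0 \<le> t" "t \<le> pi"
  shows "dist (great_circle x0 e t) x0 \<le> r \<longleftrightarrow> t \<le> source_angle"
  using dist_great_circle_le_radius_iff[of t 0] cos_mono_le_eq[of source_angle t] source_angle(2,3) assms
  by simp

lemma v0_eq_profile: "x \<in> sphere 0 1 \<Longrightarrow> v0 x = profile e (arccos (x0 \<bullet> x))"
  unfolding profile_def
  using inner_unit_le_1[OF norm_x0, of x]
  by (intro v0_eq_of_inner_eq great_circle_sphere) (auto simp: inner_great_circle_base[OF norm_x0 e x0e])

lemma profile_bounds: "0 \<le> profile e t" "profile e t \<le> 1"
  using range great_circle_sphere by (auto simp: profile_def)

lemma profile_antimono:
  assumes "0 \<le> a" "a \<le> b" "b \<le> pi"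
  shows "profile e b \<le> profile e a"
proof -
  define u where "u = great_circle_mirror x0 e ((a + b) / 2)"
  have u: "norm u = 1" by (simp add: u_def norm_great_circle_mirror[OF norm_x0 e x0e])
  have x0u: "0 \<le> x0 \<bullet> u" and au: "0 \<le> great_circle x0 e a \<bullet> u"
    using assms
    by (auto simp: u_def inner_base_great_circle_mirror[OF norm_x0 e x0e]
        inner_great_circle_mirror[OF norm_x0 e x0e] intro!: sin_ge_zero)
  have "2 * ((a + b) / 2) - a = b" by (simp add: field_simps)
  then have "hyperplane_reflection u (great_circle x0 e a) = great_circle x0 e b"
    by (simp only: u_def hyperplane_reflection_great_circle[OF norm_x0 e x0e])
  then show ?thesis
    using v0_reflection_le[OF u x0u great_circle_sphere au] by (simp add: profile_def)
qed

lemma profile_source: "0 \<le> t \<Longrightarrow> t \<le> source_angle \<Longrightarrow> profile e t = 1"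
  using on_src great_circle_sphere great_circle_in_source_iff source_angle(3)
  by (simp add: profile_def)

lemma profile_less_1: "source_angle < t \<Longrightarrow> t \<le> pi \<Longrightarrow> profile e t < 1"
  using v0_less_1 great_circle_sphere great_circle_in_source_iff source_angle(2)
  by (simp add: profile_def)

lemma profile_le_v0:
  assumes "y \<in> sphere 0 1" "cos \<beta> < x0 \<bullet> y" "0 \<le> \<beta>" "\<beta> \<le> pi"
  shows "profile e \<beta> \<le> v0 y"
proof -
  have "-1 \<le> x0 \<bullet> y" "x0 \<bullet> y \<le> 1" using inner_unit_le_1[OF norm_x0, of y] assms(1) by auto
  moreover have "arccos (x0 \<bullet> y) < \<beta>"
    using arccos_less_arccos[of "cos \<beta>" "x0 \<bullet> y"] assms calculation by (simp add: arccos_cos)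
  ultimately show ?thesis
    using v0_eq_profile[OF assms(1)] arccos_lbound assms(4) profile_antimono[of "arccos (x0 \<bullet> y)" \<beta>]
    by simp
qed

lemma v0_le_profile:
  assumes "y \<in> sphere 0 1" "x0 \<bullet> y < cos \<alpha>" "0 \<le> \<alpha>" "\<alpha> \<le> pi"
  shows "v0 y \<le> profile e \<alpha>"
proof -
  have "-1 \<le> x0 \<bullet> y" "x0 \<bullet> y \<le> 1" using inner_unit_le_1[OF norm_x0, of y] assms(1) by auto
  moreover have "\<alpha> < arccos (x0 \<bullet> y)"
    using arccos_less_arccos[of "x0 \<bullet> y" "cos \<alpha>"] assms calculation by (simp add: arccos_cos)
  ultimately show ?thesis
    using v0_eq_profile[OF assms(1)] arccos_ubound assms(3) profile_antimono[of \<alpha> "arccos (x0 \<bullet> y)"]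
    by simp
qed

lemma great_circle_window:
  assumes \<alpha>: "source_angle < \<alpha>" and L: "source_angle < L" "\<alpha> + L \<le> pi"
    and \<gamma>: "0 \<le> \<gamma>" "\<alpha> - source_angle < \<gamma>" "\<gamma> < \<beta>" "\<beta> \<le> \<alpha>"
  shows "dist (great_circle x0 e \<alpha>) (great_circle x0 e \<gamma>) < r"
    and "r < dist (great_circle x0 e (\<alpha> + L)) (great_circle x0 e \<gamma>)"
    and "cos \<beta> < x0 \<bullet> great_circle x0 e \<gamma>"
    and "x0 \<bullet> great_circle x0 e (2 * \<alpha> + L - \<gamma>) < cos \<alpha>"
proof -
  have r': "0 < source_angle" "source_angle < pi" by (rule source_angle)+
  show "dist (great_circle x0 e \<alpha>) (great_circle x0 e \<gamma>) < r"
    using assms r' cos_mono_less_eq[of source_angle "\<alpha> - \<gamma>"]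
    by (simp add: dist_great_circle_less_radius_iff)
  show "r < dist (great_circle x0 e (\<alpha> + L)) (great_circle x0 e \<gamma>)"
    using assms r' cos_mono_le_eq[of source_angle "\<alpha> + L - \<gamma>"]
    by (simp add: not_le[symmetric] dist_great_circle_le_radius_iff)
  show "cos \<beta> < x0 \<bullet> great_circle x0 e \<gamma>"
    using assms cos_mono_less_eq[of \<beta> \<gamma>] by (simp add: inner_great_circle_base[OF norm_x0 e x0e])
  show "x0 \<bullet> great_circle x0 e (2 * \<alpha> + L - \<gamma>) < cos \<alpha>"
    unfolding inner_great_circle_base[OF norm_x0 e x0e]
    using assms r' by (intro cos_less_cos_reflected) auto
qed

text \<open>Reflect across the bisector of the two level points \<alpha> and \<alpha> + L: points of the great circle
  just below \<gamma> lie within r of the first and not of the second, and the defect is positive there.\<close>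
lemma profile_level_extends:
  assumes \<alpha>: "source_angle < \<alpha>" and L: "source_angle < L" "\<alpha> + L \<le> pi"
    and level: "profile e (\<alpha> + L) = profile e \<alpha>"
    and \<gamma>: "0 \<le> \<gamma>" "\<alpha> - source_angle < \<gamma>" "\<gamma> < \<beta>" "\<beta> \<le> \<alpha>"
  shows "profile e \<beta> \<le> profile e \<alpha>"
proof (rule ccontr)
  let ?P = "great_circle x0 e" and ?r' = source_angle
  assume "\<not> profile e \<beta> \<le> profile e \<alpha>"
  then have above: "profile e \<alpha> < profile e \<beta>" by simp
  have r': "0 < ?r'" "?r' < pi" by (rule source_angle)+
  define u where "u = great_circle_mirror x0 e (\<alpha> + L / 2)"
  have u: "norm u = 1" by (simp add: u_def norm_great_circle_mirror[OF norm_x0 e x0e])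
  have x0u: "0 \<le> x0 \<bullet> u" and zu: "0 \<le> ?P \<alpha> \<bullet> u"
    using \<alpha> L r'
    by (auto simp: u_def inner_base_great_circle_mirror[OF norm_x0 e x0e]
        inner_great_circle_mirror[OF norm_x0 e x0e] intro!: sin_ge_zero)
  have reflect: "hyperplane_reflection u (?P t) = ?P (2 * \<alpha> + L - t)" for t
  proof -
    have "2 * (\<alpha> + L / 2) - t = 2 * \<alpha> + L - t" by simp
    then show ?thesis by (simp only: u_def hyperplane_reflection_great_circle[OF norm_x0 e x0e])
  qed
  have z_out: "\<not> dist (?P \<alpha>) x0 \<le> r"
    using great_circle_in_source_iff[of \<alpha>] \<alpha> L r' by simp
  define V where "V = {y. dist (?P \<alpha>) y < r} \<inter> {y. r < dist (?P (\<alpha> + L)) y} \<inter>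
    {y. cos \<beta> < x0 \<bullet> y} \<inter> {y. x0 \<bullet> hyperplane_reflection u y < cos \<alpha>}"
  have "open V"
    unfolding V_def hyperplane_reflection_def by (intro open_Int open_Collect_less continuous_intros)
  moreover have "?P \<gamma> \<in> V"
    using great_circle_window[OF \<alpha> L \<gamma>] by (simp add: V_def reflect)
  moreover have "0 < voltage_defect u y * kernel_defect u (?P \<alpha>) y" if y: "y \<in> V \<inter> sphere 0 1" for y
  proof -
    have "profile e \<beta> \<le> v0 y"
      using y \<alpha> \<gamma> L by (intro profile_le_v0) (auto simp: V_def)
    moreover have "v0 (hyperplane_reflection u y) \<le> profile e \<alpha>"
      using y \<alpha> \<gamma> L u r' by (intro v0_le_profile) (auto simp: V_def)
    ultimately have "0 < voltage_defect u y"
      using above y voltage_defect_sphere[OF u] by simp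
    moreover have "kernel_defect u (?P \<alpha>) y = 1"
      using y reflect[of \<alpha>] by (simp add: V_def kernel_defect_def disk_kernel_def)
    ultimately show ?thesis by simp
  qed
  ultimately have "0 < voltage_defect u (?P \<alpha>)"
    by (intro voltage_defect_pos[OF u x0u great_circle_sphere zu z_out, of V "?P \<gamma>"] great_circle_sphere)
  moreover have "voltage_defect u (?P \<alpha>) = 0"
    using voltage_defect_sphere[OF u great_circle_sphere, of \<alpha>] reflect[of \<alpha>] level
    by (simp add: profile_def)
  ultimately show False by simp
qed

text \<open>Otherwise the profile would be constant on an interval longer than the source angle; take
  a level point \<alpha> close to the infimum a of that level set: the previous lemma extends the level
  set below a.\<close>
lemma profile_strict_antimono:
  assumes \<theta>: "0 \<le> \<theta>" "\<theta>' \<le> pi" "\<theta> + source_angle < \<theta>'"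
  shows "profile e \<theta>' < profile e \<theta>"
proof (rule ccontr)
  let ?r' = source_angle
  have r': "0 < ?r'" "?r' < pi" by (rule source_angle)+
  assume "\<not> profile e \<theta>' < profile e \<theta>"
  then have level: "profile e \<theta> = profile e \<theta>'"
    using profile_antimono[of \<theta> \<theta>'] \<theta> r' by simp
  define I where "I = {\<phi>. 0 \<le> \<phi> \<and> \<phi> \<le> pi \<and> profile e \<phi> = profile e \<theta>'}"
  have \<theta>I: "\<theta> \<in> I" using \<theta> r' level by (simp add: I_def)
  have I_above: "?r' < \<phi>" if "\<phi> \<in> I" for \<phi>
    using that profile_source[of \<phi>] profile_less_1[of \<theta>'] \<theta> r'
    by (force simp: I_def)
  have bdd: "bdd_below I" by (auto simp: I_def bdd_below_def)
  define a where "a = Inf I"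
  have a: "?r' \<le> a"
    unfolding a_def using \<theta>I I_above by (intro cInf_greatest) (auto intro: less_imp_le)
  obtain \<alpha>0 where \<alpha>0: "\<alpha>0 \<in> I" "\<alpha>0 < a + ?r' / 4"
    using cInf_lessD[of I "a + ?r' / 4"] \<theta>I r' by (auto simp: a_def)
  define \<alpha> where "\<alpha> = min \<alpha>0 \<theta>"
  have \<alpha>I: "\<alpha> \<in> I" using \<alpha>0(1) \<theta>I by (simp add: \<alpha>_def min_def)
  have \<alpha>: "a \<le> \<alpha>" "\<alpha> < a + ?r' / 4" "\<alpha> \<le> \<theta>"
    using cInf_lower[OF \<alpha>I bdd] \<alpha>0(2) by (auto simp: a_def \<alpha>_def)
  have "profile e (\<alpha> + (\<theta>' - \<theta>)) = profile e \<alpha>"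
    using \<alpha>I \<alpha> \<theta> r' profile_antimono[of \<alpha> "\<alpha> + (\<theta>' - \<theta>)"] profile_antimono[of "\<alpha> + (\<theta>' - \<theta>)" \<theta>']
    by (auto simp: I_def)
  then have "profile e (a - ?r' / 4) \<le> profile e \<alpha>"
    using I_above[OF \<alpha>I] \<alpha> \<theta> a r'
    by (intro profile_level_extends[where \<gamma> = "a - ?r' / 2"]) auto
  moreover have "profile e \<alpha> \<le> profile e (a - ?r' / 4)"
    using \<alpha>I \<alpha> a r' by (intro profile_antimono) (auto simp: I_def)
  ultimately have "a - ?r' / 4 \<in> I"
    using \<alpha>I \<alpha> a r' by (auto simp: I_def)
  then show False
    using cInf_lower[OF _ bdd, of "a - ?r' / 4"] r' by (simp add: a_def)
qed

end

end

theorem theorem4: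
  fixes r \<rho> :: real and x0 :: "'a::euclidean_space" and v0 :: "'a \<Rightarrow> real"
    and r' :: real
  assumes dim: "DIM('a) \<ge> 2"
    and r: "0 < r" "r < 1"
    and rho: "\<rho> > 0"
    and x0: "x0 \<in> sphere 0 1"
    and meas: "v0 \<in> borel_measurable (sphere_unif :: 'a measure)"
    and range: "\<forall>x\<in>sphere 0 1. 0 \<le> v0 x \<and> v0 x \<le> 1"
    and on_src: "\<forall>x\<in>sphere 0 1. dist x x0 \<le> r \<longrightarrow> v0 x = 1"
    and eqn: "\<forall>x\<in>sphere 0 1. \<not> dist x x0 \<le> r \<longrightarrow>
       v0 x = ((LINT y:{y\<in>sphere 0 1. dist y x0 \<le> r}|sphere_unif. disk_kernel r x y)
             + (LINT y:{y\<in>sphere 0 1. \<not> dist y x0 \<le> r}|sphere_unif. v0 y * disk_kernel r x y))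
             / (\<rho> + (LINT y:sphere 0 1|sphere_unif. disk_kernel r x y))"
    and r'_def: "r' = arccos (1 - r\<^sup>2 / 2)"
  shows "\<exists>f :: real \<Rightarrow> real.
           (\<forall>\<theta>\<in>{0..pi}. 0 \<le> f \<theta> \<and> f \<theta> \<le> 1)
         \<and> (\<forall>x\<in>sphere 0 1. v0 x = f (sph_angle x0 x))
         \<and> (\<forall>\<theta>\<in>{0..pi}. \<forall>\<theta>'\<in>{0..pi}. \<theta>' > \<theta> + r' \<longrightarrow> f \<theta> > f \<theta>')"
proof -
  interpret grounded_voltage r \<rho> x0 v0
    using r rho x0 meas range on_src eqn by unfold_locales auto
  obtain e0 :: 'a where "e0 \<noteq> 0" "orthogonal x0 e0"
    using orthogonal_to_vector_exists[OF dim] by blast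
  then have e: "norm (e0 /\<^sub>R norm e0) = 1" "x0 \<bullet> (e0 /\<^sub>R norm e0) = 0"
    by (auto simp: orthogonal_def)
  show ?thesis
  proof (intro exI[of _ "profile (e0 /\<^sub>R norm e0)"] conjI ballI impI)
    show "0 \<le> profile (e0 /\<^sub>R norm e0) \<theta>" "profile (e0 /\<^sub>R norm e0) \<theta> \<le> 1" for \<theta>
      by (rule profile_bounds[OF e])+
    show "v0 x = profile (e0 /\<^sub>R norm e0) (sph_angle x0 x)" if "x \<in> sphere 0 1" for x
      using v0_eq_profile[OF e that] by (simp add: sph_angle_def)
    show "profile (e0 /\<^sub>R norm e0) \<theta>' < profile (e0 /\<^sub>R norm e0) \<theta>"
      if "\<theta> \<in> {0..pi}" "\<theta>' \<in> {0..pi}" "\<theta> + r' < \<theta>'" for \<theta> \<theta>'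
      using that by (intro profile_strict_antimono[OF e]) (auto simp: r'_def source_angle_def)
  qed
qed

end
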